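(* Let $\alpha\in[1,2]$, $1\le n\le m$, and fix a weight vector $\omega=(\omega_1,\dots,\omega_n)$ with $\omega_j\ge0$, $\sum_j\omega_j=1$. Over all $n$-tuples $(\rho_1,\dots,\rho_n)$ of $m\times m$ density matrices, the quantum Jensen–Tsallis divergence $D_\alpha^\omega(\rho_1,\dots,\rho_n)$ attains its maximum value at the degenerate matrices $\rho_j=\delta_j$, $j=1,\dots,n$, where $\delta_j=\mathrm{diag}(0,\dots,0,1,0,\dots,0)$ is the $m\times m$ diagonal matrix whose $j$-th diagonal entry is $1$ and all other entries are $0$.
   Context: An $m\times m$ density matrix is a real symmetric positive semidefinite $m\times m$ matrix with trace $1$. For $\alpha\in(0,1)\cup(1,\infty)$, the quantum Tsallis entropy is $H_\alpha(\rho)=\frac{1}{1-\alpha}\bigl(\mathrm{tr}(\rho^\alpha)-1\bigr)$ ($\rho^\alpha$ via spectral decomposition); for $\alpha=1$, $H_1(\rho)=-\mathrm{tr}(\rho\log\rho)$ is the von Neumann entropy (with $0\log0=0$). The quantum Jensen–Tsallis divergence of density matrices $\rho_1,\dots,\rho_n$ with weights $\omega$ is $$D_\alpha^{\omega}(\rho_1,\dots,\rho_n)=H_\alpha\Bigl(\sum_{j=1}^n\omega_j\rho_j\Bigr)-\sum_{j=1}^n\omega_jH_\alpha(\rho_j).$$ *)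

theory Defs
  imports Complex_Main "Jordan_Normal_Form.Matrix"
begin

text \<open>Real m x m matrices are represented by the Jordan_Normal_Form type real mat
  (with explicit dimension); indices are 0-based.\<close>

definition mat_trace :: "real mat \<Rightarrow> real" where
  "mat_trace A = (\<Sum>i<dim_row A. A $$ (i, i))"

definition density_mat :: "nat \<Rightarrow> real mat \<Rightarrow> bool" where
  "density_mat m \<rho> \<longleftrightarrow> \<rho> \<in> carrier_mat m m \<and> transpose_mat \<rho> = \<rho>
     \<and> (\<forall>v \<in> carrier_vec m. v \<bullet> (\<rho> *\<^sub>v v) \<ge> 0) \<and> mat_trace \<rho> = 1"

definition mat_fun :: "(real \<Rightarrow> real) \<Rightarrow> real mat \<Rightarrow> real mat" where
  "mat_fun f A = (let m = dim_row A in
     SOME B. \<exists>U d. U \<in> carrier_mat m m \<and> transpose_mat U * U = 1\<^sub>m m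
        \<and> A = U * mat_diag m d * transpose_mat U
        \<and> B = U * mat_diag m (\<lambda>i. f (d i)) * transpose_mat U)"

text \<open>Quantum Tsallis entropy; for alpha = 1 the von Neumann entropy
  (note x * ln x = 0 at x = 0 in Isabelle, matching 0 log 0 = 0).\<close>
definition tsallis_entropy :: "real \<Rightarrow> real mat \<Rightarrow> real" where
  "tsallis_entropy \<alpha> \<rho> =
     (if \<alpha> = 1 then - mat_trace (mat_fun (\<lambda>x. x * ln x) \<rho>)
      else (mat_trace (mat_fun (\<lambda>x. x powr \<alpha>) \<rho>) - 1) / (1 - \<alpha>))"

definition weighted_mat_sum :: "nat \<Rightarrow> nat \<Rightarrow> (nat \<Rightarrow> real) \<Rightarrow> (nat \<Rightarrow> real mat) \<Rightarrow> real mat" where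
  "weighted_mat_sum m n \<omega> \<rho> = mat m m (\<lambda>(i, k). \<Sum>j<n. \<omega> j * \<rho> j $$ (i, k))"

definition jensen_tsallis :: "real \<Rightarrow> nat \<Rightarrow> nat \<Rightarrow> (nat \<Rightarrow> real) \<Rightarrow> (nat \<Rightarrow> real mat) \<Rightarrow> real" where
  "jensen_tsallis \<alpha> m n \<omega> \<rho> =
     tsallis_entropy \<alpha> (weighted_mat_sum m n \<omega> \<rho>) - (\<Sum>j<n. \<omega> j * tsallis_entropy \<alpha> (\<rho> j))"

definition delta_mat :: "nat \<Rightarrow> nat \<Rightarrow> real mat" where
  "delta_mat m j = mat_diag m (\<lambda>i. if i = j then 1 else 0)"

end

(*
  Diagonalise each density matrix as \<rho>\<^sub>j = \<Sum>\<^sub>k q\<^sub>j\<^sub>k u\<^sub>j\<^sub>k u\<^sub>j\<^sub>k\<^sup>T. The mixture \<Sum>\<^sub>j \<omega>\<^sub>j \<rho>\<^sub>j is then a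
  combination of unit rank-one projections with weights \<omega>\<^sub>j q\<^sub>j\<^sub>k, and comparing this with its own
  eigendecomposition yields a doubly substochastic matrix carrying its eigenvalues onto these weights.
  By Jensen's inequality for the convex function t\<^sup>\<alpha> (resp. t ln t) the quantum Tsallis entropy of the
  mixture is therefore at most the classical Tsallis entropy of the joint distribution (\<omega>\<^sub>j q\<^sub>j\<^sub>k).
  Hence the divergence is at most H(\<omega> \<otimes> q) - \<Sum>\<^sub>j \<omega>\<^sub>j H(q\<^sub>j) \<le> H(\<omega>), where the last inequality is the
  classical chain rule (an equality for \<alpha> = 1). For the matrices \<delta>\<^sub>j the divergence is exactly H(\<omega>).
*)

theory Submission
  imports Defs "HOL-Analysis.Convex" "Jordan_Normal_Form.Char_Poly"
begin

section \<open>Spectral theorem for real symmetric matrices\<close>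

definition orthonormal_mat :: "nat \<Rightarrow> real mat \<Rightarrow> bool" where
  "orthonormal_mat m U \<longleftrightarrow> U \<in> carrier_mat m m \<and> transpose_mat U * U = 1\<^sub>m m"

lemma index_mult_mat_sum:
  assumes "A \<in> carrier_mat n k" "B \<in> carrier_mat k p" "i < n" "j < p"
  shows "(A * B) $$ (i,j) = (\<Sum>l<k. A $$ (i,l) * B $$ (l,j))"
  using assms by (simp add: scalar_prod_def atLeast0LessThan)

lemma index_spectral_mat:
  assumes U: "(U::real mat) \<in> carrier_mat m m" and i: "i < m" and j: "j < m"
  shows "(U * mat_diag m d * transpose_mat U) $$ (i,j) = (\<Sum>l<m. d l * U$$(i,l) * U$$(j,l))"
proof -
  have "(U * mat_diag m d * transpose_mat U) $$ (i,j)
      = (\<Sum>l<m. (U * mat_diag m d) $$ (i,l) * transpose_mat U $$ (l,j))"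
    using U i j by (intro index_mult_mat_sum[of _ m m _ m]) auto
  then show ?thesis
    using U i j by (simp add: mat_diag_mult_right[OF U] mult_ac)
qed

lemma orthonormal_mat_col_inner:
  assumes "orthonormal_mat m U" "k < m" "l < m"
  shows "(\<Sum>a<m. U$$(a,k) * U$$(a,l)) = (if k = l then 1 else 0)"
proof -
  have U: "U \<in> carrier_mat m m" and UU: "transpose_mat U * U = 1\<^sub>m m"
    using assms(1) unfolding orthonormal_mat_def by auto
  have "(transpose_mat U * U) $$ (k,l) = (\<Sum>a<m. transpose_mat U $$ (k,a) * U $$ (a,l))"
    using U assms by (intro index_mult_mat_sum[of _ m m _ m]) auto
  then show ?thesis using UU U assms by simp
qed

lemma orthonormal_mat_row_inner:
  assumes "orthonormal_mat m U" "a < m" "b < m"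
  shows "(\<Sum>k<m. U$$(a,k) * U$$(b,k)) = (if a = b then 1 else 0)"
proof -
  have U: "U \<in> carrier_mat m m" and UU: "transpose_mat U * U = 1\<^sub>m m"
    using assms(1) unfolding orthonormal_mat_def by auto
  have UU': "U * transpose_mat U = 1\<^sub>m m"
    using mat_mult_left_right_inverse[of "transpose_mat U" m U] U UU by auto
  have "(U * transpose_mat U) $$ (a,b) = (\<Sum>k<m. U $$ (a,k) * transpose_mat U $$ (k,b))"
    using U assms by (intro index_mult_mat_sum[of _ m m _ m]) auto
  then show ?thesis using UU' U assms by simp
qed

lemma mat_trace_spectral:
  assumes "orthonormal_mat m U"
  shows "mat_trace (U * mat_diag m d * transpose_mat U) = (\<Sum>k<m. d k)"
proof -
  have U: "U \<in> carrier_mat m m" using assms unfolding orthonormal_mat_def by auto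
  have "dim_row (U * mat_diag m d * transpose_mat U) = m" using U by simp
  then have "mat_trace (U * mat_diag m d * transpose_mat U) = (\<Sum>i<m. \<Sum>l<m. d l * U$$(i,l) * U$$(i,l))"
    unfolding mat_trace_def using U
    by (auto simp: index_spectral_mat simp del: index_mult_mat intro!: sum.cong)
  also have "\<dots> = (\<Sum>l<m. d l * (\<Sum>i<m. U$$(i,l) * U$$(i,l)))"
    by (subst sum.swap) (simp add: sum_distrib_left mult_ac)
  also have "\<dots> = (\<Sum>l<m. d l)"
    by (rule sum.cong) (simp_all add: orthonormal_mat_col_inner[OF assms])
  finally show ?thesis .
qed

lemma quadratic_form_sum_rank_one:
  fixes c :: "'l \<Rightarrow> real"
  assumes "finite L"
    and K: "\<And>a b. a < m \<Longrightarrow> b < m \<Longrightarrow> K a b = (\<Sum>l\<in>L. c l * f l a * f l b)"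
  shows "(\<Sum>a<m. \<Sum>b<m. x a * K a b * x b) = (\<Sum>l\<in>L. c l * (\<Sum>a<m. x a * f l a)^2)"
proof -
  have "(\<Sum>a<m. \<Sum>b<m. x a * K a b * x b) = (\<Sum>a<m. \<Sum>b<m. \<Sum>l\<in>L. c l * (x a * f l a) * (x b * f l b))"
    by (intro sum.cong refl) (simp add: K sum_distrib_left sum_distrib_right mult_ac)
  also have "\<dots> = (\<Sum>l\<in>L. \<Sum>a<m. \<Sum>b<m. c l * (x a * f l a) * (x b * f l b))"
    by (simp add: sum.swap[where A = "{..<m}" and B = L] sum.swap[where B = L])
  also have "\<dots> = (\<Sum>l\<in>L. c l * (\<Sum>a<m. x a * f l a)^2)"
    by (simp add: power2_eq_square sum_product sum_distrib_left mult_ac)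
  finally show ?thesis .
qed

lemma orthonormal_mat_mult:
  assumes "orthonormal_mat m U" "orthonormal_mat m V"
  shows "orthonormal_mat m (U * V)"
proof -
  have U: "U \<in> carrier_mat m m" and V: "V \<in> carrier_mat m m"
    using assms unfolding orthonormal_mat_def by auto
  have "transpose_mat (U * V) * (U * V) = transpose_mat V * (transpose_mat U * U) * V"
    using U V by (simp add: transpose_mult assoc_mult_mat[of _ m m _ m _ m])
  then show ?thesis using assms U V unfolding orthonormal_mat_def by simp
qed

lemma mat_diag_Suc_four_block:
  fixes d :: "nat \<Rightarrow> real"
  shows "mat_diag (Suc m) d
     = four_block_mat (d 0 \<cdot>\<^sub>m 1\<^sub>m 1) (0\<^sub>m 1 m) (0\<^sub>m m 1) (mat_diag m (\<lambda>k. d (Suc k)))"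
  by (rule eq_matI) (auto simp: mat_diag_def)

lemma orthonormal_mat_four_block:
  assumes "orthonormal_mat m V"
  shows "orthonormal_mat (Suc m) (four_block_mat (1\<^sub>m 1) (0\<^sub>m 1 m) (0\<^sub>m m 1) V)"
proof -
  have V: "V \<in> carrier_mat m m" and VV: "transpose_mat V * V = 1\<^sub>m m"
    using assms unfolding orthonormal_mat_def by auto
  note mult = mult_four_block_mat[where ?nr1.0=1 and ?n1.0=1 and ?nr2.0=m and ?n2.0=m and ?nc1.0=1 and ?nc2.0=m]
  note tr = transpose_four_block_mat[where ?nr1.0=1 and ?nc1.0=1 and ?nr2.0=m and ?nc2.0=m]
  have "four_block_mat (1\<^sub>m 1) (0\<^sub>m 1 m) (0\<^sub>m m 1) V \<in> carrier_mat (Suc m) (Suc m)"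
    using four_block_carrier_mat[of "1\<^sub>m 1" 1 1 V m m] V by simp
  moreover have "transpose_mat (four_block_mat (1\<^sub>m 1) (0\<^sub>m 1 m) (0\<^sub>m m 1) V)
      * four_block_mat (1\<^sub>m 1) (0\<^sub>m 1 m) (0\<^sub>m m 1) V = 1\<^sub>m (Suc m)"
    using V VV by (simp add: tr mult del: One_nat_def) simp
  ultimately show ?thesis unfolding orthonormal_mat_def ..
qed

lemma spectral_four_block:
  fixes d :: "nat \<Rightarrow> real"
  assumes V: "V \<in> carrier_mat m m"
  shows "four_block_mat (1\<^sub>m 1) (0\<^sub>m 1 m) (0\<^sub>m m 1) V * mat_diag (Suc m) d
      * transpose_mat (four_block_mat (1\<^sub>m 1) (0\<^sub>m 1 m) (0\<^sub>m m 1) V)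
    = four_block_mat (d 0 \<cdot>\<^sub>m 1\<^sub>m 1) (0\<^sub>m 1 m) (0\<^sub>m m 1) (V * mat_diag m (\<lambda>k. d (Suc k)) * transpose_mat V)"
proof -
  note mult = mult_four_block_mat[where ?nr1.0=1 and ?n1.0=1 and ?nr2.0=m and ?n2.0=m and ?nc1.0=1 and ?nc2.0=m]
  note tr = transpose_four_block_mat[where ?nr1.0=1 and ?nc1.0=1 and ?nr2.0=m and ?nc2.0=m]
  have VD: "V * mat_diag m (\<lambda>k. d (Suc k)) \<in> carrier_mat m m" using V by simp
  have "four_block_mat (1\<^sub>m 1) (0\<^sub>m 1 m) (0\<^sub>m m 1) V * mat_diag (Suc m) d
      = four_block_mat (d 0 \<cdot>\<^sub>m 1\<^sub>m 1) (0\<^sub>m 1 m) (0\<^sub>m m 1) (V * mat_diag m (\<lambda>k. d (Suc k)))"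
    using V by (simp add: mat_diag_Suc_four_block mult left_mult_zero_mat[of _ m m] del: One_nat_def)
  moreover have VDV: "V * mat_diag m (\<lambda>k. d (Suc k)) * transpose_mat V \<in> carrier_mat m m"
    using V VD by (metis mult_carrier_mat transpose_carrier_mat)
  ultimately show ?thesis using V VD
    by (simp add: tr mult right_mult_zero_mat[OF VD] left_add_zero_mat[OF VDV] del: One_nat_def)
qed


lemma symmetric_mat_index:
  assumes "A \<in> carrier_mat n n" "transpose_mat A = A" "i < n" "j < n"
  shows "A $$ (i,j) = A $$ (j,i)"
proof -
  have "transpose_mat A $$ (j,i) = A $$ (i,j)" using assms(1,3,4) by simp
  then show ?thesis unfolding assms(2) by simp
qed

lemma sum_power2_pos:
  fixes z :: "nat \<Rightarrow> real"
  assumes "i < m" "z i \<noteq> 0"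
  shows "(\<Sum>j<m. (z j)^2) > 0"
proof -
  have "(z i)^2 \<le> (\<Sum>j<m. (z j)^2)" by (rule member_le_sum) (use assms in auto)
  moreover have "(z i)^2 > 0" using assms by simp
  ultimately show ?thesis by linarith
qed

lemma unit_eigenvector_of_eigenvector:
  fixes z :: "nat \<Rightarrow> real"
  assumes ev: "\<And>i. i < m \<Longrightarrow> (\<Sum>j<m. A$$(i,j) * z j) = lam * z i"
    and nz: "i0 < m" "z i0 \<noteq> 0"
  shows "\<exists>u. (\<forall>i<m. (\<Sum>j<m. A$$(i,j) * u j) = lam * u i) \<and> (\<Sum>i<m. (u i)^2) = 1"
proof -
  define s where "s = sqrt (\<Sum>j<m. (z j)^2)"
  have pos: "(\<Sum>j<m. (z j)^2) > 0" using sum_power2_pos[of i0 m z, OF nz] .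
  then have s2: "s^2 = (\<Sum>j<m. (z j)^2)" unfolding s_def by simp
  have "\<forall>i<m. (\<Sum>j<m. A$$(i,j) * (z j / s)) = lam * (z i / s)"
    using ev by (simp add: sum_divide_distrib[symmetric])
  moreover have "(\<Sum>i<m. (z i / s)^2) = 1"
  proof -
    have "(\<Sum>i<m. (z i / s)^2) = (\<Sum>i<m. (z i)^2) / s^2"
      by (simp add: power_divide sum_divide_distrib)
    also have "\<dots> = 1" using pos s2 by simp
    finally show ?thesis .
  qed
  ultimately show ?thesis by (intro exI[of _ "\<lambda>j. z j / s"]) simp
qed

text \<open>A complex eigenvalue \<open>a + i b\<close> of a real symmetric matrix, with eigenvector
  \<open>x + i y\<close>, is real: the two expressions for \<open>y\<^sup>T A x = x\<^sup>T A y\<close> differ by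
  \<open>b (|x|\<^sup>2 + |y|\<^sup>2)\<close>.\<close>
lemma symmetric_mat_eigenvalue_Im_zero:
  fixes A :: "real mat" and x y :: "nat \<Rightarrow> real"
  assumes A: "A \<in> carrier_mat m m" and sym: "transpose_mat A = A"
    and re: "\<And>i. i < m \<Longrightarrow> (\<Sum>j<m. A$$(i,j) * x j) = a * x i - b * y i"
    and im: "\<And>i. i < m \<Longrightarrow> (\<Sum>j<m. A$$(i,j) * y j) = b * x i + a * y i"
  shows "b * ((\<Sum>i<m. (x i)^2) + (\<Sum>i<m. (y i)^2)) = 0"
proof -
  note Asym = symmetric_mat_index[OF A sym]
  have "(\<Sum>i<m. y i * (\<Sum>j<m. A$$(i,j) * x j)) = (\<Sum>j<m. \<Sum>i<m. y i * A$$(i,j) * x j)"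
    by (subst sum.swap) (simp add: sum_distrib_left mult_ac)
  also have "\<dots> = (\<Sum>j<m. x j * (\<Sum>i<m. A$$(j,i) * y i))"
    by (intro sum.cong refl) (auto simp: sum_distrib_left mult_ac Asym)
  finally have "(\<Sum>i<m. y i * (a * x i - b * y i)) = (\<Sum>j<m. x j * (b * x j + a * y j))"
    by (simp add: re im)
  then show ?thesis
    by (simp add: algebra_simps sum_subtractf sum.distrib sum_distrib_left power2_eq_square)
qed

lemma real_mat_complex_eigenvector:
  fixes A :: "real mat"
  assumes A: "A \<in> carrier_mat m m" and m: "0 < m"
  obtains i0 and x y :: "nat \<Rightarrow> real" and a b :: real where "i0 < m" "x i0 \<noteq> 0 \<or> y i0 \<noteq> 0"
    and "\<And>i. i < m \<Longrightarrow> (\<Sum>j<m. A$$(i,j) * x j) = a * x i - b * y i"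
    and "\<And>i. i < m \<Longrightarrow> (\<Sum>j<m. A$$(i,j) * y j) = b * x i + a * y i"
proof -
  define Ac where "Ac = map_mat complex_of_real A"
  have Ac: "Ac \<in> carrier_mat m m" unfolding Ac_def using A by simp
  obtain es where cp: "char_poly Ac = (\<Prod>a\<leftarrow>es. [:- a, 1:])" and len: "length es = m"
    using char_poly_factorized[OF Ac] by blast
  obtain e es' where es: "es = e # es'" using len m by (cases es) auto
  have "eigenvalue Ac e"
    using eigenvalue_root_char_poly[OF Ac] unfolding cp es by simp
  then obtain v where "eigenvector Ac v e" unfolding eigenvalue_def by blast
  then have v: "v \<in> carrier_vec m" and v0: "v \<noteq> 0\<^sub>v m" and Av: "Ac *\<^sub>v v = e \<cdot>\<^sub>v v"
    unfolding eigenvector_def using Ac by auto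
  have eq: "(\<Sum>j<m. complex_of_real (A$$(i,j)) * v$j) = e * v$i" if i: "i < m" for i
    using arg_cong[OF Av, of "\<lambda>w. w $ i"] i v A unfolding Ac_def
    by (simp add: scalar_prod_def atLeast0LessThan)
  obtain i0 where i0: "i0 < m" "v $ i0 \<noteq> 0"
  proof -
    have "\<not> (\<forall>i<m. v $ i = 0)" using v v0 by (auto intro!: eq_vecI)
    then show ?thesis using that by blast
  qed
  show ?thesis
  proof (rule that[of i0 "\<lambda>j. Re (v$j)" "\<lambda>j. Im (v$j)" "Re e" "Im e"])
    show "Re (v$i0) \<noteq> 0 \<or> Im (v$i0) \<noteq> 0" using i0 by (simp add: complex_eq_iff)
    show "(\<Sum>j<m. A$$(i,j) * Re (v$j)) = Re e * Re (v$i) - Im e * Im (v$i)" if "i < m" for i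
      using arg_cong[OF eq[OF that], of Re] by (simp add: Re_sum)
    show "(\<Sum>j<m. A$$(i,j) * Im (v$j)) = Im e * Re (v$i) + Re e * Im (v$i)" if "i < m" for i
      using arg_cong[OF eq[OF that], of Im] by (simp add: Im_sum)
  qed (rule i0)
qed

lemma symmetric_mat_unit_eigenvector:
  fixes A :: "real mat"
  assumes A: "A \<in> carrier_mat m m" and sym: "transpose_mat A = A" and m: "0 < m"
  shows "\<exists>u lam. (\<forall>i<m. (\<Sum>j<m. A$$(i,j) * u j) = lam * u i) \<and> (\<Sum>i<m. (u i)^2) = 1"
proof -
  obtain i0 x y a b where i0: "i0 < m" and xy: "x i0 \<noteq> 0 \<or> y i0 \<noteq> 0"
    and re: "\<And>i. i < m \<Longrightarrow> (\<Sum>j<m. A$$(i,j) * x j) = a * x i - b * y i"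
    and im: "\<And>i. i < m \<Longrightarrow> (\<Sum>j<m. A$$(i,j) * y j) = b * x i + a * y i"
    using real_mat_complex_eigenvector[OF A m] by blast
  have "(\<Sum>i<m. (x i)^2) \<ge> 0" "(\<Sum>i<m. (y i)^2) \<ge> 0" by (simp_all add: sum_nonneg)
  then have "(\<Sum>i<m. (x i)^2) + (\<Sum>i<m. (y i)^2) > 0"
    using xy sum_power2_pos[OF i0, of x] sum_power2_pos[OF i0, of y]
    by (metis add_nonneg_pos add_pos_nonneg)
  then have "b = 0" using symmetric_mat_eigenvalue_Im_zero[OF A sym re im] by simp
  then have xe: "\<And>i. i < m \<Longrightarrow> (\<Sum>j<m. A$$(i,j) * x j) = a * x i"
    and ye: "\<And>i. i < m \<Longrightarrow> (\<Sum>j<m. A$$(i,j) * y j) = a * y i"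
    using re im by auto
  show ?thesis
  proof (cases "x i0 = 0")
    case True
    then show ?thesis using xy unit_eigenvector_of_eigenvector[OF ye i0] by auto
  next
    case False
    then show ?thesis using unit_eigenvector_of_eigenvector[OF xe i0] by auto
  qed
qed

text \<open>The reflection in the hyperplane orthogonal to \<open>w\<close>; for \<open>w = 0\<close> it is the identity,
  since \<open>2 / 0 = 0\<close>.\<close>
definition householder_mat :: "nat \<Rightarrow> (nat \<Rightarrow> real) \<Rightarrow> real mat" where
  "householder_mat N w =
     mat N N (\<lambda>(i,j). (if i = j then 1 else 0) - 2 / (\<Sum>k<N. (w k)^2) * w i * w j)"

lemma householder_mat_carrier: "householder_mat N w \<in> carrier_mat N N"
  by (simp add: householder_mat_def)

lemma transpose_householder_mat: "transpose_mat (householder_mat N w) = householder_mat N w"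
  by (rule eq_matI) (auto simp: householder_mat_def mult_ac)

lemma householder_mat_involution: "householder_mat N w * householder_mat N w = 1\<^sub>m N"
proof (rule eq_matI)
  define S where "S = (\<Sum>k<N. (w k)^2)"
  define c where "c = 2 / S"
  have cS: "c * c * S = 2 * c"
    unfolding c_def by (cases "S = 0") (simp_all add: field_simps power2_eq_square)
  note H = householder_mat_carrier[of N w]
  fix i j assume "i < dim_row (1\<^sub>m N)" and "j < dim_col (1\<^sub>m N)"
  then have i: "i < N" and j: "j < N" by auto
  have "(householder_mat N w * householder_mat N w) $$ (i,j)
      = (\<Sum>k<N. householder_mat N w $$ (i,k) * householder_mat N w $$ (k,j))"
    by (rule index_mult_mat_sum[OF H H i j])
  also have "\<dots> = (\<Sum>k<N. (if k = i then (if i = j then 1 else 0) else 0)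
       - (if i = k then c * w k * w j else 0) - (if k = j then c * w i * w k else 0)
       + c * c * w i * w j * (w k)^2)"
    by (rule sum.cong)
      (auto simp: householder_mat_def c_def S_def i j algebra_simps power2_eq_square)
  also have "\<dots> = (if i = j then 1 else 0) - 2 * c * w i * w j + (c * c * S) * w i * w j"
    using i j unfolding S_def
    by (simp add: sum.distrib sum_subtractf sum_distrib_left sum_distrib_right mult_ac)
  also have "\<dots> = 1\<^sub>m N $$ (i,j)" using i j by (simp add: cS)
  finally show "(householder_mat N w * householder_mat N w) $$ (i,j) = 1\<^sub>m N $$ (i,j)" .
qed (simp_all add: householder_mat_def)

lemma householder_mat_first_col:
  fixes u :: "nat \<Rightarrow> real"
  assumes unit: "(\<Sum>i<N. (u i)^2) = 1" and i: "i < N"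
  shows "householder_mat N (\<lambda>i. u i - (if i = 0 then 1 else 0)) $$ (i,0) = u i"
proof -
  define w where "w i = u i - (if i = 0 then 1 else 0)" for i
  define S where "S = (\<Sum>i<N. (w i)^2)"
  have N: "0 < N" using i by simp
  have H: "householder_mat N w $$ (i,0) = (if i = 0 then 1 else 0) - 2 / S * w i * w 0"
    using i N by (simp add: householder_mat_def S_def)
  show ?thesis
  proof (cases "S = 0")
    case True
    then have "w i = 0"
      using i unfolding S_def by (subst (asm) sum_nonneg_eq_0_iff) auto
    then show ?thesis using H True unfolding w_def by (auto split: if_splits)
  next
    case False
    have "(w i)^2 = (u i)^2 - (if i = 0 then 2 * u i - 1 else 0)" for i
      unfolding w_def by (simp add: power2_diff)
    then have "S = (\<Sum>i<N. (u i)^2) - (\<Sum>i<N. if i = 0 then 2 * u i - 1 else 0)"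
      unfolding S_def by (simp add: sum_subtractf)
    then have "S = 2 - 2 * u 0" using unit N by simp
    then have "2 / S * w 0 = -1" using False unfolding w_def by (auto simp: field_simps)
    then have "2 / S * w i * w 0 = - w i" by (metis mult.assoc mult.commute mult_minus1)
    then show ?thesis using H unfolding w_def by auto
  qed
qed

lemma reflection_deflates_eigenvector:
  fixes A H :: "real mat"
  assumes A: "A \<in> carrier_mat N N" and H: "H \<in> carrier_mat N N" and HH: "H * H = 1\<^sub>m N"
    and Hu: "\<forall>i<N. H$$(i,0) = u i"
    and ev: "\<forall>i<N. (\<Sum>j<N. A$$(i,j) * u j) = lam * u i" and i: "i < N"
  shows "(H * A * H) $$ (i,0) = (if i = 0 then lam else 0)"
proof -
  have N: "0 < N" using i by simp
  have "(H * A * H) $$ (i,0) = (\<Sum>k<N. (H * A) $$ (i,k) * H$$(k,0))"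
    using H A i N by (intro index_mult_mat_sum[of _ N N]) auto
  also have "\<dots> = (\<Sum>k<N. (\<Sum>l<N. H$$(i,l) * A$$(l,k)) * u k)"
    by (rule sum.cong[OF refl]) (simp add: index_mult_mat_sum[OF H A i] Hu)
  also have "\<dots> = (\<Sum>l<N. H$$(i,l) * (\<Sum>k<N. A$$(l,k) * u k))"
    unfolding sum_distrib_right sum_distrib_left by (subst sum.swap) (simp add: mult.assoc)
  also have "\<dots> = (\<Sum>l<N. H$$(i,l) * (lam * H$$(l,0)))"
    by (intro sum.cong refl) (simp add: ev Hu)
  also have "\<dots> = lam * (\<Sum>l<N. H$$(i,l) * H$$(l,0))"
    by (simp add: sum_distrib_left mult.left_commute)
  also have "\<dots> = lam * (H * H) $$ (i,0)"
    by (simp add: index_mult_mat_sum[OF H H i N])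
  finally show ?thesis using HH i N by simp
qed

lemma four_block_of_first_col:
  fixes B :: "real mat"
  assumes B: "B \<in> carrier_mat (Suc m) (Suc m)" and sym: "transpose_mat B = B"
    and col: "\<forall>i<Suc m. B$$(i,0) = (if i = 0 then lam else 0)"
  shows "B = four_block_mat (lam \<cdot>\<^sub>m 1\<^sub>m 1) (0\<^sub>m 1 m) (0\<^sub>m m 1) (mat m m (\<lambda>(i,j). B$$(Suc i, Suc j)))"
    (is "B = ?F")
proof (rule eq_matI)
  fix i j assume "i < dim_row ?F" and "j < dim_col ?F"
  then have i: "i < Suc m" and j: "j < Suc m" by auto
  have row: "B$$(0,j) = (if j = 0 then lam else 0)"
    using symmetric_mat_index[OF B sym _ j] col j by auto
  show "B $$ (i,j) = ?F $$ (i,j)"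
    using i j col row by (cases i; cases j) auto
qed (use B in auto)

lemma symmetric_mat_conj:
  fixes A H :: "real mat"
  assumes A: "A \<in> carrier_mat n n" "transpose_mat A = A"
    and H: "H \<in> carrier_mat n n" "transpose_mat H = H"
  shows "transpose_mat (H * A * H) = H * A * H"
proof -
  have "transpose_mat (H * A * H) = transpose_mat H * transpose_mat (H * A)"
    using H A by (intro transpose_mult[of _ n n]) auto
  also have "transpose_mat (H * A) = transpose_mat A * transpose_mat H"
    using H A by (intro transpose_mult[of _ n n]) auto
  finally show ?thesis using H A by (simp add: assoc_mult_mat[of _ n n _ n _ n])
qed

lemma spectral_of_reflection_conj:
  fixes A H W :: "real mat"
  assumes A: "A \<in> carrier_mat n n" and W: "W \<in> carrier_mat n n"
    and H: "H \<in> carrier_mat n n" "transpose_mat H = H" "H * H = 1\<^sub>m n"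
    and conj: "H * A * H = W * mat_diag n d * transpose_mat W"
  shows "A = (H * W) * mat_diag n d * transpose_mat (H * W)"
proof -
  note assoc = assoc_mult_mat[of _ n n _ n _ n]
  have sq: "X * Y \<in> carrier_mat n n"
    if "X \<in> carrier_mat n n" "Y \<in> carrier_mat n n" for X Y :: "real mat"
    using that by simp
  have "A = (H * H) * A * (H * H)" using A H(3) by simp
  also have "\<dots> = H * (H * A * H) * H" using H(1) A by (simp add: assoc)
  also have "\<dots> = (H * W) * mat_diag n d * (transpose_mat W * transpose_mat H)"
    unfolding conj using H W by (simp add: assoc sq)
  also have "transpose_mat W * transpose_mat H = transpose_mat (H * W)"
    using transpose_mult[OF H(1) W] by simp
  finally show ?thesis .
qed

theorem spectral_theorem:
  fixes A :: "real mat"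
  assumes "A \<in> carrier_mat N N" "transpose_mat A = A"
  shows "\<exists>U d. orthonormal_mat N U \<and> A = U * mat_diag N d * transpose_mat U"
  using assms
proof (induction N arbitrary: A)
  case 0
  then have "A = 1\<^sub>m 0 * mat_diag 0 (\<lambda>_. 0) * transpose_mat (1\<^sub>m 0)"
    by (auto intro!: eq_matI)
  then show ?case unfolding orthonormal_mat_def by force
next
  case (Suc m)
  have A: "A \<in> carrier_mat (Suc m) (Suc m)" and Asym: "transpose_mat A = A"
    using Suc.prems by auto
  obtain u lam where ev: "\<forall>i<Suc m. (\<Sum>j<Suc m. A$$(i,j) * u j) = lam * u i"
    and unit: "(\<Sum>i<Suc m. (u i)^2) = 1"
    using symmetric_mat_unit_eigenvector[OF A Asym] by auto
  define H where "H = householder_mat (Suc m) (\<lambda>i. u i - (if i = 0 then 1 else 0))"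
  have H: "H \<in> carrier_mat (Suc m) (Suc m)" and Ht: "transpose_mat H = H"
    and HH: "H * H = 1\<^sub>m (Suc m)" and Hu: "\<forall>i<Suc m. H$$(i,0) = u i"
    unfolding H_def using householder_mat_first_col[OF unit]
    by (simp_all add: householder_mat_carrier transpose_householder_mat householder_mat_involution)
  \<comment> \<open>\<open>H\<close> swaps \<open>e\<^sub>0\<close> and \<open>u\<close>, so \<open>H A H\<close> has \<open>e\<^sub>0\<close> as an eigenvector and splits into blocks.\<close>
  define B where "B = H * A * H"
  define C where "C = mat m m (\<lambda>(i,j). B$$(Suc i, Suc j))"
  have B: "B \<in> carrier_mat (Suc m) (Suc m)" unfolding B_def using H A by auto
  have Bsym: "transpose_mat B = B" unfolding B_def using symmetric_mat_conj[OF A Asym H Ht] .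
  have Bblock: "B = four_block_mat (lam \<cdot>\<^sub>m 1\<^sub>m 1) (0\<^sub>m 1 m) (0\<^sub>m m 1) C"
    unfolding C_def using B Bsym reflection_deflates_eigenvector[OF A H HH Hu ev]
    by (intro four_block_of_first_col) (auto simp: B_def)
  have "C \<in> carrier_mat m m" "transpose_mat C = C"
    unfolding C_def using symmetric_mat_index[OF B Bsym] by (auto intro!: eq_matI)
  then obtain V D where V: "orthonormal_mat m V" and CV: "C = V * mat_diag m D * transpose_mat V"
    using Suc.IH by blast
  define W where "W = four_block_mat (1\<^sub>m 1) (0\<^sub>m 1 m) (0\<^sub>m m 1) V"
  define d where "d k = (case k of 0 \<Rightarrow> lam | Suc k \<Rightarrow> D k)" for k
  have W: "orthonormal_mat (Suc m) W"
    unfolding W_def by (rule orthonormal_mat_four_block[OF V])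
  have "B = W * mat_diag (Suc m) d * transpose_mat W"
    unfolding W_def Bblock CV d_def
    using spectral_four_block[of V m] V by (simp add: orthonormal_mat_def)
  then have "A = (H * W) * mat_diag (Suc m) d * transpose_mat (H * W)"
    using spectral_of_reflection_conj[OF A _ H Ht HH] W
    unfolding B_def orthonormal_mat_def by blast
  moreover have "orthonormal_mat (Suc m) (H * W)"
    using orthonormal_mat_mult W H Ht HH unfolding orthonormal_mat_def by metis
  ultimately show ?case by blast
qed

section \<open>Majorization of weights by eigenvalues\<close>

lemma convex_sum_le_substochastic:
  fixes \<phi> :: "real \<Rightarrow> real" and a :: "'i \<Rightarrow> nat \<Rightarrow> real"
  assumes I: "finite I" and cv: "convex_on {0..} \<phi>" and \<phi>0: "\<phi> 0 = 0"
    and a0: "\<And>i k. i \<in> I \<Longrightarrow> k < m \<Longrightarrow> a i k \<ge> 0" and \<mu>0: "\<And>k. k < m \<Longrightarrow> \<mu> k \<ge> 0"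
    and row: "\<And>i. i \<in> I \<Longrightarrow> (\<Sum>k<m. a i k) \<le> 1"
    and col: "\<And>k. k < m \<Longrightarrow> \<mu> k \<noteq> 0 \<Longrightarrow> (\<Sum>i\<in>I. a i k) = 1"
    and p: "\<And>i. i \<in> I \<Longrightarrow> p i = (\<Sum>k<m. a i k * \<mu> k)"
  shows "(\<Sum>i\<in>I. \<phi> (p i)) \<le> (\<Sum>k<m. \<phi> (\<mu> k))"
proof -
  \<comment> \<open>Jensen's inequality for each row, with the missing mass \<open>1 - \<Sum>\<^sub>k a i k\<close> put on the point \<open>0\<close>.\<close>
  have jensen: "\<phi> (p i) \<le> (\<Sum>k<m. a i k * \<phi> (\<mu> k))" if i: "i \<in> I" for i
  proof -
    define w where "w k = (if k < m then a i k else 1 - (\<Sum>k<m. a i k))" for k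
    define z where "z k = (if k < m then \<mu> k else 0)" for k
    have "\<phi> (\<Sum>k<Suc m. w k *\<^sub>R z k) \<le> (\<Sum>k<Suc m. w k * \<phi> (z k))"
    proof (rule convex_on_sum[OF _ _ cv])
      show "\<And>k. k \<in> {..<Suc m} \<Longrightarrow> 0 \<le> w k"
        unfolding w_def using a0[OF i] row[OF i] by auto
      show "\<And>k. k \<in> {..<Suc m} \<Longrightarrow> z k \<in> {0..}"
        unfolding z_def using \<mu>0 by auto
      show "(\<Sum>k\<in>{..<Suc m}. w k) = 1" unfolding w_def by simp
    qed auto
    then show ?thesis unfolding w_def z_def using p[OF i] by (simp add: \<phi>0)
  qed
  have "(\<Sum>i\<in>I. \<phi> (p i)) \<le> (\<Sum>i\<in>I. \<Sum>k<m. a i k * \<phi> (\<mu> k))"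
    by (rule sum_mono) (rule jensen)
  also have "\<dots> = (\<Sum>k<m. (\<Sum>i\<in>I. a i k) * \<phi> (\<mu> k))"
    by (subst sum.swap) (simp add: sum_distrib_right)
  also have "\<dots> = (\<Sum>k<m. \<phi> (\<mu> k))"
    by (intro sum.cong refl) (metis \<phi>0 col lessThan_iff mult_1 mult_zero_right)
  finally show ?thesis .
qed

text \<open>A positive semidefinite matrix given both by an eigendecomposition \<open>U diag(\<mu>) U\<^sup>T\<close> and as a
  weighted sum \<open>\<Sum>\<^sub>i p\<^sub>i v\<^sub>i v\<^sub>i\<^sup>T\<close> of unit rank-one projections.\<close>
locale rank_one_decomposition =
  fixes m :: nat and U :: "real mat" and \<mu> :: "nat \<Rightarrow> real"
    and I :: "'i set" and p :: "'i \<Rightarrow> real" and v :: "'i \<Rightarrow> nat \<Rightarrow> real"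
  assumes orthonormal: "orthonormal_mat m U"
    and decomposition: "\<And>a b. a < m \<Longrightarrow> b < m \<Longrightarrow>
       (\<Sum>l<m. \<mu> l * U$$(a,l) * U$$(b,l)) = (\<Sum>i\<in>I. p i * v i a * v i b)"
    and finite_index: "finite I" and weight_nonneg: "\<And>i. i \<in> I \<Longrightarrow> p i \<ge> 0"
    and unit: "\<And>i. i \<in> I \<Longrightarrow> (\<Sum>a<m. (v i a)^2) = 1"
begin

definition coord :: "'i \<Rightarrow> nat \<Rightarrow> real" where
  "coord i k = (\<Sum>a<m. v i a * U$$(a,k))"

lemma quadratic_form_eq:
  "(\<Sum>l<m. \<mu> l * (\<Sum>a<m. x a * U$$(a,l))^2) = (\<Sum>i\<in>I. p i * (\<Sum>a<m. x a * v i a)^2)"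
proof -
  define K where "K a b = (\<Sum>l<m. \<mu> l * U$$(a,l) * U$$(b,l))" for a b
  have "(\<Sum>a<m. \<Sum>b<m. x a * K a b * x b) = (\<Sum>l<m. \<mu> l * (\<Sum>a<m. x a * U$$(a,l))^2)"
    by (rule quadratic_form_sum_rank_one) (auto simp: K_def)
  moreover have "(\<Sum>a<m. \<Sum>b<m. x a * K a b * x b) = (\<Sum>i\<in>I. p i * (\<Sum>a<m. x a * v i a)^2)"
    by (rule quadratic_form_sum_rank_one) (auto simp: K_def decomposition finite_index)
  ultimately show ?thesis by simp
qed

lemma eigenvalue_eq:
  assumes k: "k < m"
  shows "\<mu> k = (\<Sum>i\<in>I. p i * (coord i k)^2)"
proof -
  have "(\<Sum>l<m. \<mu> l * (\<Sum>a<m. U$$(a,k) * U$$(a,l))^2) = (\<Sum>l<m. if l = k then \<mu> l else 0)"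
    by (intro sum.cong refl) (simp add: orthonormal_mat_col_inner[OF orthonormal] k)
  also have "\<dots> = \<mu> k" using k by simp
  finally show ?thesis
    using quadratic_form_eq[of "\<lambda>a. U$$(a,k)"] by (simp add: coord_def mult.commute)
qed

lemma eigenvalue_nonneg: "k < m \<Longrightarrow> \<mu> k \<ge> 0"
  by (simp add: eigenvalue_eq sum_nonneg weight_nonneg)

lemma sum_coord_power2:
  assumes i: "i \<in> I"
  shows "(\<Sum>k<m. (coord i k)^2) = 1"
proof -
  have "(\<Sum>k<m. 1 * (coord i k)^2) = (\<Sum>a<m. \<Sum>b<m. v i a * (if a = b then 1 else 0) * v i b)"
    unfolding coord_def
    by (rule quadratic_form_sum_rank_one[symmetric])
       (simp_all add: orthonormal_mat_row_inner[OF orthonormal])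
  also have "\<dots> = (\<Sum>a<m. (v i a)^2)"
  proof (intro sum.cong refl)
    fix a assume a: "a \<in> {..<m}"
    have "(\<Sum>b<m. v i a * (if a = b then 1 else 0) * v i b) = (\<Sum>b<m. if b = a then (v i a)^2 else 0)"
      by (intro sum.cong refl) (auto simp: power2_eq_square)
    then show "(\<Sum>b<m. v i a * (if a = b then 1 else 0) * v i b) = (v i a)^2" using a by simp
  qed
  finally show ?thesis using unit[OF i] by simp
qed

text \<open>Testing the quadratic form against \<open>x = U diag(\<mu>)\<^sup>+ U\<^sup>T v\<^sub>i\<close> shows
  \<open>p\<^sub>i (v\<^sub>i\<^sup>T M\<^sup>+ v\<^sub>i)\<^sup>2 \<le> v\<^sub>i\<^sup>T M\<^sup>+ v\<^sub>i\<close>; the pseudo-inverse is harmless because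
  \<open>x / 0 = 0\<close>.\<close>
lemma weight_pseudo_inverse_le:
  assumes i: "i \<in> I"
  shows "p i * (\<Sum>k<m. (coord i k)^2 / \<mu> k) \<le> 1"
proof -
  define T where "T = (\<Sum>k<m. (coord i k)^2 / \<mu> k)"
  define x where "x a = (\<Sum>k<m. U$$(a,k) * (coord i k / \<mu> k))" for a
  have xU: "(\<Sum>a<m. x a * U$$(a,l)) = coord i l / \<mu> l" if l: "l < m" for l
  proof -
    have "(\<Sum>a<m. x a * U$$(a,l)) = (\<Sum>k<m. coord i k / \<mu> k * (\<Sum>a<m. U$$(a,k) * U$$(a,l)))"
      unfolding x_def sum_distrib_right sum_distrib_left
      by (subst sum.swap) (simp add: mult_ac)
    also have "\<dots> = (\<Sum>k<m. if k = l then coord i k / \<mu> k else 0)"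
      by (intro sum.cong refl) (simp add: orthonormal_mat_col_inner[OF orthonormal] l)
    finally show ?thesis using l by simp
  qed
  have lhs: "(\<Sum>l<m. \<mu> l * (\<Sum>a<m. x a * U$$(a,l))^2) = T"
    unfolding T_def by (rule sum.cong) (auto simp: xU power_divide power2_eq_square)
  have xv: "(\<Sum>a<m. x a * v i a) = T"
  proof -
    have "(\<Sum>a<m. x a * v i a) = (\<Sum>k<m. coord i k / \<mu> k * coord i k)"
      unfolding x_def coord_def sum_distrib_right sum_distrib_left
      by (subst sum.swap) (simp add: mult_ac)
    then show ?thesis unfolding T_def by (simp add: power2_eq_square)
  qed
  have "p i * (\<Sum>a<m. x a * v i a)^2 \<le> (\<Sum>i\<in>I. p i * (\<Sum>a<m. x a * v i a)^2)"
    by (rule member_le_sum[OF i _ finite_index]) (simp add: weight_nonneg)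
  then have "p i * T^2 \<le> T" using quadratic_form_eq[of x] lhs xv by simp
  moreover have "T \<ge> 0" unfolding T_def by (intro sum_nonneg) (simp add: eigenvalue_nonneg)
  ultimately have "p i * T \<le> 1"
    by (cases "T = 0") (simp_all add: power2_eq_square mult_le_cancel_right)
  then show ?thesis unfolding T_def .
qed

theorem sum_convex_weights_le_eigenvalues:
  fixes \<phi> :: "real \<Rightarrow> real"
  assumes cv: "convex_on {0..} \<phi>" and \<phi>0: "\<phi> 0 = 0"
  shows "(\<Sum>i\<in>I. \<phi> (p i)) \<le> (\<Sum>k<m. \<phi> (\<mu> k))"
proof (rule convex_sum_le_substochastic[OF finite_index cv \<phi>0, where a = "\<lambda>i k. p i * (coord i k)^2 / \<mu> k"])
  fix i assume i: "i \<in> I"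
  have "(\<Sum>k<m. p i * (coord i k)^2 / \<mu> k) = p i * (\<Sum>k<m. (coord i k)^2 / \<mu> k)"
    by (simp add: sum_distrib_left)
  then show "(\<Sum>k<m. p i * (coord i k)^2 / \<mu> k) \<le> 1"
    using weight_pseudo_inverse_le[OF i] by simp
  have "p i * (coord i k)^2 / \<mu> k * \<mu> k = p i * (coord i k)^2" if "k < m" for k
  proof (cases "\<mu> k = 0")
    case True
    then have "p i * (coord i k)^2 = 0"
      using eigenvalue_eq[OF that] i finite_index weight_nonneg
      by (simp add: sum_nonneg_eq_0_iff)
    then show ?thesis by simp
  qed simp
  then show "p i = (\<Sum>k<m. p i * (coord i k)^2 / \<mu> k * \<mu> k)"
    using sum_coord_power2[OF i] by (simp add: sum_distrib_left[symmetric])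
next
  fix k assume "k < m" "\<mu> k \<noteq> 0"
  then show "(\<Sum>i\<in>I. p i * (coord i k)^2 / \<mu> k) = 1"
    by (simp add: eigenvalue_eq[symmetric] sum_divide_distrib[symmetric])
qed (auto simp: weight_nonneg eigenvalue_nonneg)

end

lemma spectral_sum_convex_eq:
  fixes \<phi> :: "real \<Rightarrow> real"
  assumes U: "orthonormal_mat m U" and V: "orthonormal_mat m V"
    and eq: "U * mat_diag m \<mu> * transpose_mat U = V * mat_diag m \<nu> * transpose_mat V"
    and \<nu>: "\<And>k. k < m \<Longrightarrow> \<nu> k \<ge> 0"
    and cv: "convex_on {0..} \<phi>" and \<phi>0: "\<phi> 0 = 0"
  shows "(\<Sum>k<m. \<phi> (\<mu> k)) = (\<Sum>k<m. \<phi> (\<nu> k))"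
proof -
  have entries: "(\<Sum>l<m. \<mu> l * U$$(a,l) * U$$(b,l)) = (\<Sum>l<m. \<nu> l * V$$(a,l) * V$$(b,l))"
    if "a < m" "b < m" for a b
    using arg_cong[OF eq, of "\<lambda>A. A $$ (a,b)"] U V that
    by (simp add: index_spectral_mat orthonormal_mat_def del: index_mult_mat)
  have unit: "(\<Sum>a<m. (W$$(a,l))^2) = 1" if "orthonormal_mat m W" "l < m" for W l
    using orthonormal_mat_col_inner[OF that(1) that(2) that(2)] by (simp add: power2_eq_square)
  interpret UV: rank_one_decomposition m U \<mu> "{..<m}" \<nu> "\<lambda>l a. V$$(a,l)"
    by unfold_locales (auto simp: U entries \<nu> unit[OF V])
  have \<mu>: "\<And>k. k < m \<Longrightarrow> \<mu> k \<ge> 0" by (rule UV.eigenvalue_nonneg)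
  interpret VU: rank_one_decomposition m V \<nu> "{..<m}" \<mu> "\<lambda>l a. U$$(a,l)"
    by unfold_locales (auto simp: V entries \<mu> unit[OF U])
  show ?thesis
    using UV.sum_convex_weights_le_eigenvalues[OF cv \<phi>0]
      VU.sum_convex_weights_le_eigenvalues[OF cv \<phi>0] by simp
qed

text \<open>\<open>mat_fun\<close> chooses an arbitrary eigendecomposition; the lemma above shows that the
  resulting trace does not depend on the choice.\<close>
lemma trace_mat_fun_spectral:
  fixes \<phi> :: "real \<Rightarrow> real"
  assumes U: "orthonormal_mat m U" and A: "A = U * mat_diag m d * transpose_mat U"
    and d: "\<And>k. k < m \<Longrightarrow> d k \<ge> 0" and cv: "convex_on {0..} \<phi>" and \<phi>0: "\<phi> 0 = 0"
  shows "mat_trace (mat_fun \<phi> A) = (\<Sum>k<m. \<phi> (d k))"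
proof -
  define P where "P B \<longleftrightarrow> (\<exists>U d. U \<in> carrier_mat m m \<and> transpose_mat U * U = 1\<^sub>m m
        \<and> A = U * mat_diag m d * transpose_mat U
        \<and> B = U * mat_diag m (\<lambda>i. \<phi> (d i)) * transpose_mat U)" for B
  have "dim_row A = m" using A U unfolding orthonormal_mat_def by auto
  then have "mat_fun \<phi> A = (SOME B. P B)" unfolding mat_fun_def P_def by simp
  moreover have "P (SOME B. P B)"
    by (rule someI[of _ "U * mat_diag m (\<lambda>i. \<phi> (d i)) * transpose_mat U"])
       (use U A in \<open>auto simp: P_def orthonormal_mat_def\<close>)
  ultimately obtain V e where V: "orthonormal_mat m V" and AV: "A = V * mat_diag m e * transpose_mat V"
    and mf: "mat_fun \<phi> A = V * mat_diag m (\<lambda>i. \<phi> (e i)) * transpose_mat V"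
    unfolding P_def orthonormal_mat_def by metis
  have "mat_trace (mat_fun \<phi> A) = (\<Sum>k<m. \<phi> (e k))"
    unfolding mf by (rule mat_trace_spectral[OF V])
  also have "\<dots> = (\<Sum>k<m. \<phi> (d k))"
    by (rule spectral_sum_convex_eq[OF V U _ d cv \<phi>0]) (use A AV in simp)
  finally show ?thesis .
qed

section \<open>Tsallis entropy\<close>

definition tsallis_fun :: "real \<Rightarrow> real \<Rightarrow> real" where
  "tsallis_fun \<alpha> x = (if \<alpha> = 1 then x * ln x else x powr \<alpha>)"

definition tsallis_of_sum :: "real \<Rightarrow> real \<Rightarrow> real" where
  "tsallis_of_sum \<alpha> s = (if \<alpha> = 1 then - s else (s - 1) / (1 - \<alpha>))"

definition classical_tsallis :: "real \<Rightarrow> 'a set \<Rightarrow> ('a \<Rightarrow> real) \<Rightarrow> real" where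
  "classical_tsallis \<alpha> K p = tsallis_of_sum \<alpha> (\<Sum>k\<in>K. tsallis_fun \<alpha> (p k))"

lemma tsallis_entropy_eq_tsallis_of_sum:
  "tsallis_entropy \<alpha> X = tsallis_of_sum \<alpha> (mat_trace (mat_fun (tsallis_fun \<alpha>) X))"
  unfolding tsallis_entropy_def tsallis_of_sum_def tsallis_fun_def by auto

lemma tsallis_fun_zero [simp]: "tsallis_fun \<alpha> 0 = 0"
  by (simp add: tsallis_fun_def)

lemma tsallis_of_sum_tsallis_fun_one [simp]: "tsallis_of_sum \<alpha> (tsallis_fun \<alpha> 1) = 0"
  by (simp add: tsallis_of_sum_def tsallis_fun_def)

lemma tsallis_of_sum_antimono:
  assumes "1 \<le> \<alpha>" "s \<le> t"
  shows "tsallis_of_sum \<alpha> t \<le> tsallis_of_sum \<alpha> s"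
  using assms by (auto simp: tsallis_of_sum_def intro: divide_right_mono_neg)

lemma convex_on_extend_to_zero:
  fixes f :: "real \<Rightarrow> real"
  assumes cv: "convex_on {0<..} f" and f0: "f 0 = 0"
    and chord: "\<And>t y. 0 \<le> t \<Longrightarrow> t \<le> 1 \<Longrightarrow> 0 \<le> y \<Longrightarrow> f (t * y) \<le> t * f y"
  shows "convex_on {0..} f"
proof (rule convex_onI)
  fix t x y :: real assume t: "0 < t" "t < 1" and x: "x \<in> {0..}" and y: "y \<in> {0..}"
  show "f ((1 - t) *\<^sub>R x + t *\<^sub>R y) \<le> (1 - t) * f x + t * f y"
  proof (cases "x = 0 \<or> y = 0")
    case True
    then show ?thesis using chord[of t y] chord[of "1 - t" x] t x y f0 by auto
  next
    case False
    then show ?thesis using convex_onD[OF cv, of t x y] t x y by simp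
  qed
qed (rule convex_real_interval)

lemma convex_on_tsallis_fun:
  assumes "1 \<le> \<alpha>"
  shows "convex_on {0..} (tsallis_fun \<alpha>)"
proof (cases "\<alpha> = 1")
  case True
  have "convex_on {0<..} (\<lambda>x::real. x * ln x)"
  proof (rule f''_ge0_imp_convex[where f' = "\<lambda>x. ln x + 1" and f'' = "\<lambda>x. 1 / x"])
    fix x :: real assume x: "x \<in> {0<..}"
    show "((\<lambda>x. x * ln x) has_real_derivative ln x + 1) (at x)"
      using x by (auto intro!: derivative_eq_intros)
    show "((\<lambda>x. ln x + 1) has_real_derivative 1 / x) (at x)"
      using x by (auto intro!: derivative_eq_intros)
    show "0 \<le> 1 / x" using x by simp
  qed (rule convex_real_interval)
  moreover have "t * y * ln (t * y) \<le> t * (y * ln y)" if "0 \<le> t" "t \<le> 1" "0 \<le> y" for t y :: real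
  proof (cases "t = 0 \<or> y = 0")
    case False
    then have "t * y * ln (t * y) = t * y * ln t + t * (y * ln y)"
      using that by (simp add: ln_mult algebra_simps)
    moreover have "t * y * ln t \<le> 0"
      using False that by (simp add: mult_nonneg_nonpos)
    ultimately show ?thesis by simp
  qed auto
  ultimately have "convex_on {0..} (\<lambda>x::real. x * ln x)"
    by (intro convex_on_extend_to_zero) auto
  then show ?thesis using True unfolding tsallis_fun_def by simp
next
  case False
  have "(t * y) powr \<alpha> \<le> t * y powr \<alpha>" if "0 \<le> t" "t \<le> 1" "0 \<le> y" for t y :: real
  proof -
    have "t powr \<alpha> \<le> t" using that assms by (cases "t = 0") (auto intro: powr_le_one_le)
    then show ?thesis using that by (simp add: powr_mult mult_right_mono)
  qed
  then have "convex_on {0..} (\<lambda>x::real. x powr \<alpha>)"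
    by (intro convex_on_extend_to_zero powr_convex assms) auto
  then show ?thesis using False unfolding tsallis_fun_def by simp
qed

lemma tsallis_fun_mult:
  assumes "0 \<le> x" "0 \<le> y"
  shows "tsallis_fun \<alpha> (x * y) = (if \<alpha> = 1 then y * tsallis_fun \<alpha> x + x * tsallis_fun \<alpha> y
    else tsallis_fun \<alpha> x * tsallis_fun \<alpha> y)"
proof (cases "x = 0 \<or> y = 0")
  case False
  then have "0 < x" "0 < y" using assms by auto
  then show ?thesis by (simp add: tsallis_fun_def ln_mult powr_mult algebra_simps)
qed (auto simp: tsallis_fun_def)

lemma sum_tsallis_fun_joint:
  "(\<Sum>x\<in>{..<n} \<times> {..<m}. tsallis_fun \<alpha> ((\<lambda>(j,k). \<omega> j * q j k) x))
     = (\<Sum>j<n. \<Sum>k<m. tsallis_fun \<alpha> (\<omega> j * q j k))"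
  by (simp add: sum.cartesian_product split_def)

lemma shannon_joint_eq:
  fixes \<omega> :: "nat \<Rightarrow> real" and q :: "nat \<Rightarrow> nat \<Rightarrow> real"
  assumes \<omega>0: "\<And>j. j < n \<Longrightarrow> \<omega> j \<ge> 0"
    and q0: "\<And>j k. j < n \<Longrightarrow> k < m \<Longrightarrow> q j k \<ge> 0" and q1: "\<And>j. j < n \<Longrightarrow> (\<Sum>k<m. q j k) = 1"
  shows "classical_tsallis 1 ({..<n} \<times> {..<m}) (\<lambda>(j,k). \<omega> j * q j k)
    = classical_tsallis 1 {..<n} \<omega> + (\<Sum>j<n. \<omega> j * classical_tsallis 1 {..<m} (q j))"
proof -
  have "(\<Sum>k<m. tsallis_fun 1 (\<omega> j * q j k))
      = tsallis_fun 1 (\<omega> j) + \<omega> j * (\<Sum>k<m. tsallis_fun 1 (q j k))" if j: "j < n" for j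
    using \<omega>0[OF j] q0[OF j] q1[OF j]
    by (simp add: tsallis_fun_mult sum.distrib sum_distrib_left sum_distrib_right[symmetric])
  then show ?thesis
    unfolding classical_tsallis_def sum_tsallis_fun_joint
    by (simp add: tsallis_of_sum_def sum.distrib sum_negf)
qed

lemma tsallis_joint_le:
  fixes \<omega> :: "nat \<Rightarrow> real" and q :: "nat \<Rightarrow> nat \<Rightarrow> real"
  assumes \<alpha>: "1 < \<alpha>"
    and \<omega>0: "\<And>j. j < n \<Longrightarrow> \<omega> j \<ge> 0" and \<omega>1: "(\<Sum>j<n. \<omega> j) = 1"
    and q0: "\<And>j k. j < n \<Longrightarrow> k < m \<Longrightarrow> q j k \<ge> 0" and q1: "\<And>j. j < n \<Longrightarrow> (\<Sum>k<m. q j k) = 1"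
  shows "classical_tsallis \<alpha> ({..<n} \<times> {..<m}) (\<lambda>(j,k). \<omega> j * q j k)
    \<le> classical_tsallis \<alpha> {..<n} \<omega> + (\<Sum>j<n. \<omega> j * classical_tsallis \<alpha> {..<m} (q j))"
proof -
  let ?\<phi> = "tsallis_fun \<alpha>"
  define S where "S j = (\<Sum>k<m. ?\<phi> (q j k))" for j
  have "(\<Sum>k<m. ?\<phi> (\<omega> j * q j k)) = ?\<phi> (\<omega> j) * S j" if j: "j < n" for j
    using \<alpha> \<omega>0[OF j] q0[OF j] unfolding S_def by (simp add: tsallis_fun_mult sum_distrib_left)
  then have joint: "(\<Sum>j<n. \<Sum>k<m. ?\<phi> (\<omega> j * q j k)) = (\<Sum>j<n. ?\<phi> (\<omega> j) * S j)"
    by simp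
  have le_self: "?\<phi> x \<le> x" if "0 \<le> x" "x \<le> 1" for x
    using that \<alpha> by (cases "x = 0") (auto simp: tsallis_fun_def intro: powr_le_one_le)
  have S_le: "S j \<le> 1" if j: "j < n" for j
  proof -
    have "S j \<le> (\<Sum>k<m. q j k)" unfolding S_def
      using q0[OF j] q1[OF j]
      by (intro sum_mono le_self) (auto intro: member_le_sum[of _ _ "\<lambda>k. q j k", THEN order_trans])
    then show ?thesis using q1[OF j] by simp
  qed
  have \<omega>_le: "?\<phi> (\<omega> j) \<le> \<omega> j" if j: "j < n" for j
    using \<omega>0 \<omega>1 j by (intro le_self) (auto intro: member_le_sum[of j "{..<n}", THEN order_trans])
  have "0 \<le> (\<Sum>j<n. (?\<phi> (\<omega> j) - \<omega> j) * (S j - 1))"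
    by (intro sum_nonneg mult_nonpos_nonpos) (simp_all add: S_le \<omega>_le)
  then have "(\<Sum>j<n. ?\<phi> (\<omega> j)) + (\<Sum>j<n. \<omega> j * S j) - 2 \<le> (\<Sum>j<n. ?\<phi> (\<omega> j) * S j) - 1"
    using \<omega>1 by (simp add: algebra_simps sum.distrib sum_subtractf)
  then have "((\<Sum>j<n. ?\<phi> (\<omega> j) * S j) - 1) / (1 - \<alpha>)
      \<le> ((\<Sum>j<n. ?\<phi> (\<omega> j)) + (\<Sum>j<n. \<omega> j * S j) - 2) / (1 - \<alpha>)"
    using \<alpha> by (intro divide_right_mono_neg) auto
  moreover have "(\<Sum>j<n. \<omega> j * ((S j - 1) / (1 - \<alpha>))) = ((\<Sum>j<n. \<omega> j * S j) - 1) / (1 - \<alpha>)"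
    using \<omega>1 by (simp add: sum_divide_distrib[symmetric] right_diff_distrib sum_subtractf)
  ultimately show ?thesis
    using \<alpha> unfolding classical_tsallis_def sum_tsallis_fun_joint joint S_def
    by (simp add: tsallis_of_sum_def diff_divide_distrib add_divide_distrib)
qed

lemma classical_tsallis_joint_le:
  fixes \<omega> :: "nat \<Rightarrow> real" and q :: "nat \<Rightarrow> nat \<Rightarrow> real"
  assumes \<alpha>: "1 \<le> \<alpha>"
    and \<omega>0: "\<And>j. j < n \<Longrightarrow> \<omega> j \<ge> 0" and \<omega>1: "(\<Sum>j<n. \<omega> j) = 1"
    and q0: "\<And>j k. j < n \<Longrightarrow> k < m \<Longrightarrow> q j k \<ge> 0" and q1: "\<And>j. j < n \<Longrightarrow> (\<Sum>k<m. q j k) = 1"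
  shows "classical_tsallis \<alpha> ({..<n} \<times> {..<m}) (\<lambda>(j,k). \<omega> j * q j k)
    \<le> classical_tsallis \<alpha> {..<n} \<omega> + (\<Sum>j<n. \<omega> j * classical_tsallis \<alpha> {..<m} (q j))"
proof (cases "\<alpha> = 1")
  case True
  then show ?thesis using shannon_joint_eq[OF \<omega>0 q0 q1] by simp
next
  case False
  then show ?thesis using tsallis_joint_le[OF _ \<omega>0 \<omega>1 q0 q1] \<alpha> by simp
qed

section \<open>Density matrices and the divergence\<close>

lemma scalar_prod_mult_mat_vec_sum:
  assumes "A \<in> carrier_mat m m" "v \<in> carrier_vec m"
  shows "v \<bullet> (A *\<^sub>v v) = (\<Sum>a<m. \<Sum>b<m. v $ a * A $$ (a,b) * v $ b)"
  using assms by (simp add: scalar_prod_def atLeast0LessThan sum_distrib_left mult_ac)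

lemma psd_spectral_nonneg:
  fixes \<rho> :: "real mat"
  assumes psd: "\<forall>v \<in> carrier_vec m. v \<bullet> (\<rho> *\<^sub>v v) \<ge> 0"
    and U: "orthonormal_mat m U" and dec: "\<rho> = U * mat_diag m d * transpose_mat U" and k: "k < m"
  shows "d k \<ge> 0"
proof -
  have Uc: "U \<in> carrier_mat m m" using U unfolding orthonormal_mat_def by simp
  have \<rho>: "\<rho> \<in> carrier_mat m m"
    unfolding dec using Uc by (metis mult_carrier_mat mat_diag_dim transpose_carrier_mat)
  define v where "v = vec m (\<lambda>a. U$$(a,k))"
  have "v \<bullet> (\<rho> *\<^sub>v v) = (\<Sum>a<m. \<Sum>b<m. U$$(a,k) * \<rho>$$(a,b) * U$$(b,k))"
    unfolding v_def using scalar_prod_mult_mat_vec_sum[OF \<rho>, of "vec m (\<lambda>a. U$$(a,k))"] by simp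
  also have "\<dots> = (\<Sum>l<m. d l * (\<Sum>a<m. U$$(a,k) * U$$(a,l))^2)"
    by (rule quadratic_form_sum_rank_one) (simp_all add: dec index_spectral_mat[OF Uc])
  also have "\<dots> = (\<Sum>l<m. if l = k then d l else 0)"
    by (intro sum.cong refl) (simp add: orthonormal_mat_col_inner[OF U] k)
  also have "\<dots> = d k" using k by simp
  finally show ?thesis using psd unfolding v_def by (metis vec_carrier)
qed

lemma density_mat_spectral:
  assumes "density_mat m \<rho>"
  shows "\<exists>U d. orthonormal_mat m U \<and> \<rho> = U * mat_diag m d * transpose_mat U
    \<and> (\<forall>k<m. d k \<ge> 0) \<and> (\<Sum>k<m. d k) = 1"
proof -
  have \<rho>: "\<rho> \<in> carrier_mat m m" "transpose_mat \<rho> = \<rho>"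
    and psd: "\<forall>v \<in> carrier_vec m. v \<bullet> (\<rho> *\<^sub>v v) \<ge> 0" and tr: "mat_trace \<rho> = 1"
    using assms unfolding density_mat_def by auto
  obtain U d where U: "orthonormal_mat m U" and dec: "\<rho> = U * mat_diag m d * transpose_mat U"
    using spectral_theorem[OF \<rho>] by blast
  show ?thesis
    using U dec psd_spectral_nonneg[OF psd U dec] tr mat_trace_spectral[OF U] by metis
qed

lemma density_mats_spectral:
  assumes "\<forall>j<n. density_mat m (\<rho> j)"
  obtains U q where "\<And>j. j < n \<Longrightarrow> orthonormal_mat m (U j)"
    and "\<And>j. j < n \<Longrightarrow> \<rho> j = U j * mat_diag m (q j) * transpose_mat (U j)"
    and "\<And>j k. j < n \<Longrightarrow> k < m \<Longrightarrow> q j k \<ge> 0"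
    and "\<And>j. j < n \<Longrightarrow> (\<Sum>k<m. q j k) = 1"
proof -
  have "\<forall>j\<in>{..<n}. \<exists>U q. orthonormal_mat m U \<and> \<rho> j = U * mat_diag m q * transpose_mat U
      \<and> (\<forall>k<m. q k \<ge> 0) \<and> (\<Sum>k<m. q k) = 1"
    using density_mat_spectral assms by blast
  from bchoice[OF this] obtain U where "\<forall>j\<in>{..<n}. \<exists>q. orthonormal_mat m (U j)
      \<and> \<rho> j = U j * mat_diag m q * transpose_mat (U j) \<and> (\<forall>k<m. q k \<ge> 0) \<and> (\<Sum>k<m. q k) = 1" ..
  from bchoice[OF this] obtain q where "\<forall>j\<in>{..<n}. orthonormal_mat m (U j)
      \<and> \<rho> j = U j * mat_diag m (q j) * transpose_mat (U j)
      \<and> (\<forall>k<m. q j k \<ge> 0) \<and> (\<Sum>k<m. q j k) = 1" ..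
  then show ?thesis by (intro that) auto
qed

lemma density_mat_delta_mat:
  assumes j: "j < m"
  shows "density_mat m (delta_mat m j)"
proof -
  have "v \<bullet> (delta_mat m j *\<^sub>v v) = (v $ j)^2" if v: "v \<in> carrier_vec m" for v
  proof -
    have "v \<bullet> (delta_mat m j *\<^sub>v v) = (\<Sum>a<m. \<Sum>b<m. v $ a * delta_mat m j $$ (a,b) * v $ b)"
      using v by (intro scalar_prod_mult_mat_vec_sum) (simp_all add: delta_mat_def)
    also have "\<dots> = (\<Sum>a<m. if a = j then (v $ j)^2 else 0)"
    proof (intro sum.cong refl)
      fix a assume a: "a \<in> {..<m}"
      have "(\<Sum>b<m. v $ a * delta_mat m j $$ (a,b) * v $ b)
          = (\<Sum>b<m. if b = j then (if a = j then (v $ j)^2 else 0) else 0)"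
        using a by (intro sum.cong refl) (auto simp: delta_mat_def mat_diag_def power2_eq_square)
      then show "(\<Sum>b<m. v $ a * delta_mat m j $$ (a,b) * v $ b) = (if a = j then (v $ j)^2 else 0)"
        using j by simp
    qed
    also have "\<dots> = (v $ j)^2" using j by simp
    finally show ?thesis .
  qed
  moreover have "transpose_mat (delta_mat m j) = delta_mat m j"
    unfolding delta_mat_def by (rule eq_matI) (auto simp: mat_diag_def)
  moreover have "mat_trace (delta_mat m j) = 1"
    unfolding mat_trace_def delta_mat_def using j by (simp add: mat_diag_def)
  ultimately show ?thesis unfolding density_mat_def delta_mat_def by simp
qed

lemma tsallis_entropy_spectral:
  assumes \<alpha>: "1 \<le> \<alpha>" and U: "orthonormal_mat m U" and X: "X = U * mat_diag m d * transpose_mat U"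
    and d: "\<And>k. k < m \<Longrightarrow> d k \<ge> 0"
  shows "tsallis_entropy \<alpha> X = classical_tsallis \<alpha> {..<m} d"
  unfolding tsallis_entropy_eq_tsallis_of_sum classical_tsallis_def
  using trace_mat_fun_spectral[OF U X d convex_on_tsallis_fun[OF \<alpha>]] by simp

lemma tsallis_entropy_mat_diag:
  assumes "1 \<le> \<alpha>" "\<And>k. k < m \<Longrightarrow> g k \<ge> 0"
  shows "tsallis_entropy \<alpha> (mat_diag m g) = classical_tsallis \<alpha> {..<m} g"
  by (rule tsallis_entropy_spectral[of _ _ "1\<^sub>m m"]) (use assms in \<open>auto simp: orthonormal_mat_def left_mult_one_mat[of _ m m] right_mult_one_mat[of _ m m]\<close>)

lemma index_weighted_mat_sum:
  "a < m \<Longrightarrow> b < m \<Longrightarrow> weighted_mat_sum m n \<omega> \<rho> $$ (a,b) = (\<Sum>j<n. \<omega> j * \<rho> j $$ (a,b))"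
  by (simp add: weighted_mat_sum_def)

text \<open>The mixture is \<open>\<Sum>\<^sub>j\<^sub>k \<omega>\<^sub>j q\<^sub>j\<^sub>k u\<^sub>j\<^sub>k u\<^sub>j\<^sub>k\<^sup>T\<close> in terms of the eigenvectors \<open>u\<^sub>j\<^sub>k\<close> of the
  \<open>\<rho>\<^sub>j\<close>, so its spectrum majorizes the joint distribution \<open>\<omega>\<^sub>j q\<^sub>j\<^sub>k\<close>.\<close>
lemma index_weighted_mat_sum_spectral:
  assumes U: "\<And>j. j < n \<Longrightarrow> U j \<in> carrier_mat m m"
    and \<rho>: "\<And>j. j < n \<Longrightarrow> \<rho> j = U j * mat_diag m (q j) * transpose_mat (U j)"
    and "a < m" "b < m"
  shows "weighted_mat_sum m n \<omega> \<rho> $$ (a,b)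
    = (\<Sum>(j,k)\<in>{..<n} \<times> {..<m}. \<omega> j * q j k * U j $$ (a,k) * U j $$ (b,k))"
  using assms by (simp add: index_weighted_mat_sum index_spectral_mat sum.cartesian_product
      sum_distrib_left mult_ac del: index_mult_mat)

lemma tsallis_entropy_mixture_le:
  fixes \<omega> :: "nat \<Rightarrow> real" and q :: "nat \<Rightarrow> nat \<Rightarrow> real"
  assumes \<alpha>: "1 \<le> \<alpha>" and \<omega>0: "\<And>j. j < n \<Longrightarrow> \<omega> j \<ge> 0"
    and U: "\<And>j. j < n \<Longrightarrow> orthonormal_mat m (U j)"
    and \<rho>: "\<And>j. j < n \<Longrightarrow> \<rho> j = U j * mat_diag m (q j) * transpose_mat (U j)"
    and q0: "\<And>j k. j < n \<Longrightarrow> k < m \<Longrightarrow> q j k \<ge> 0"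
  shows "tsallis_entropy \<alpha> (weighted_mat_sum m n \<omega> \<rho>)
    \<le> classical_tsallis \<alpha> ({..<n} \<times> {..<m}) (\<lambda>(j,k). \<omega> j * q j k)"
proof -
  let ?M = "weighted_mat_sum m n \<omega> \<rho>"
  have Uc: "U j \<in> carrier_mat m m" if "j < n" for j
    using U[OF that] unfolding orthonormal_mat_def by simp
  note entry = index_weighted_mat_sum_spectral[where n = n and U = U and q = q and \<omega> = \<omega>, OF Uc \<rho>]
  have Mc: "?M \<in> carrier_mat m m" by (simp add: weighted_mat_sum_def)
  moreover have "transpose_mat ?M = ?M"
    by (rule eq_matI) (use Mc in \<open>auto simp: entry mult_ac\<close>)
  ultimately obtain V \<mu> where V: "orthonormal_mat m V" and M: "?M = V * mat_diag m \<mu> * transpose_mat V"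
    using spectral_theorem by blast
  interpret rank_one_decomposition m V \<mu> "{..<n} \<times> {..<m}" "\<lambda>(j,k). \<omega> j * q j k"
    "\<lambda>(j,k) a. U j $$ (a,k)"
  proof
    fix a b assume "a < m" "b < m"
    then show "(\<Sum>l<m. \<mu> l * V $$ (a,l) * V $$ (b,l))
        = (\<Sum>x\<in>{..<n} \<times> {..<m}. (case x of (j,k) \<Rightarrow> \<omega> j * q j k)
            * (case x of (j,k) \<Rightarrow> \<lambda>a. U j $$ (a,k)) a * (case x of (j,k) \<Rightarrow> \<lambda>a. U j $$ (a,k)) b)"
      using entry[where a = a and b = b] M V index_spectral_mat[of V m a b \<mu>]
      by (simp add: orthonormal_mat_def split_def mult_ac del: index_mult_mat)
  next
    fix x assume "x \<in> {..<n} \<times> {..<m}"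
    then show "(\<Sum>a<m. ((case x of (j,k) \<Rightarrow> \<lambda>a. U j $$ (a,k)) a)^2) = 1"
      using orthonormal_mat_col_inner[OF U] by (auto simp: power2_eq_square)
  qed (use V \<omega>0 q0 in auto)
  have "tsallis_entropy \<alpha> ?M = classical_tsallis \<alpha> {..<m} \<mu>"
    by (rule tsallis_entropy_spectral[OF \<alpha> V M eigenvalue_nonneg])
  also have "\<dots> \<le> classical_tsallis \<alpha> ({..<n} \<times> {..<m}) (\<lambda>(j,k). \<omega> j * q j k)"
    unfolding classical_tsallis_def
    by (intro tsallis_of_sum_antimono[OF \<alpha>] sum_convex_weights_le_eigenvalues convex_on_tsallis_fun[OF \<alpha>])
       simp
  finally show ?thesis .
qed

lemma weighted_mat_sum_delta_mat:
  assumes "n \<le> m"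
  shows "weighted_mat_sum m n \<omega> (delta_mat m) = mat_diag m (\<lambda>k. if k < n then \<omega> k else 0)"
proof (rule eq_matI)
  fix a b assume "a < dim_row (mat_diag m (\<lambda>k. if k < n then \<omega> k else 0))"
    and "b < dim_col (mat_diag m (\<lambda>k. if k < n then \<omega> k else 0))"
  then have a: "a < m" and b: "b < m" by (auto simp: mat_diag_def)
  have "(\<Sum>j<n. \<omega> j * delta_mat m j $$ (a,b)) = (\<Sum>j<n. if j = a then (if a = b then \<omega> a else 0) else 0)"
    using a b by (intro sum.cong refl) (auto simp: delta_mat_def mat_diag_def)
  then show "weighted_mat_sum m n \<omega> (delta_mat m) $$ (a,b)
      = mat_diag m (\<lambda>k. if k < n then \<omega> k else 0) $$ (a,b)"
    using a b by (simp add: index_weighted_mat_sum mat_diag_def)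
qed (auto simp: weighted_mat_sum_def mat_diag_def)

lemma jensen_tsallis_delta_mat:
  assumes \<alpha>: "1 \<le> \<alpha>" and nm: "n \<le> m" and \<omega>0: "\<And>j. j < n \<Longrightarrow> \<omega> j \<ge> 0"
  shows "jensen_tsallis \<alpha> m n \<omega> (delta_mat m) = classical_tsallis \<alpha> {..<n} \<omega>"
proof -
  have "tsallis_entropy \<alpha> (weighted_mat_sum m n \<omega> (delta_mat m))
      = classical_tsallis \<alpha> {..<m} (\<lambda>k. if k < n then \<omega> k else 0)"
    unfolding weighted_mat_sum_delta_mat[OF nm] by (rule tsallis_entropy_mat_diag) (auto simp: \<alpha> \<omega>0)
  also have "\<dots> = classical_tsallis \<alpha> {..<n} \<omega>"
  proof -
    have "{..<m} \<inter> {k. k < n} = {..<n}" using nm by auto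
    then show ?thesis
      unfolding classical_tsallis_def by (simp add: if_distrib sum.If_cases cong: if_cong)
  qed
  finally have mixture: "tsallis_entropy \<alpha> (weighted_mat_sum m n \<omega> (delta_mat m))
      = classical_tsallis \<alpha> {..<n} \<omega>" .
  have "tsallis_entropy \<alpha> (delta_mat m j) = 0" if j: "j < m" for j
  proof -
    have "(\<Sum>k<m. tsallis_fun \<alpha> (if k = j then 1 else 0)) = tsallis_fun \<alpha> 1"
      using j by (simp add: if_distrib cong: if_cong)
    then show ?thesis
      unfolding delta_mat_def by (subst tsallis_entropy_mat_diag) (auto simp: \<alpha> classical_tsallis_def)
  qed
  then show ?thesis
    unfolding jensen_tsallis_def mixture using nm by simp
qed

theorem proposition3:
  fixes \<alpha> :: real and m n :: nat and \<omega> :: "nat \<Rightarrow> real" and \<rho> :: "nat \<Rightarrow> real mat"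
  assumes "1 \<le> \<alpha>" and "\<alpha> \<le> 2"
    and "1 \<le> n" and "n \<le> m"
    and "\<forall>j<n. \<omega> j \<ge> 0" and "(\<Sum>j<n. \<omega> j) = 1"
    and "\<forall>j<n. density_mat m (\<rho> j)"
  shows "(\<forall>j<n. density_mat m (delta_mat m j))
    \<and> jensen_tsallis \<alpha> m n \<omega> \<rho> \<le> jensen_tsallis \<alpha> m n \<omega> (delta_mat m)"
proof
  show "\<forall>j<n. density_mat m (delta_mat m j)"
    using assms(4) by (auto intro: density_mat_delta_mat)
  obtain U q where U: "\<And>j. j < n \<Longrightarrow> orthonormal_mat m (U j)"
    and \<rho>: "\<And>j. j < n \<Longrightarrow> \<rho> j = U j * mat_diag m (q j) * transpose_mat (U j)"
    and q0: "\<And>j k. j < n \<Longrightarrow> k < m \<Longrightarrow> q j k \<ge> 0"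
    and q1: "\<And>j. j < n \<Longrightarrow> (\<Sum>k<m. q j k) = 1"
    using density_mats_spectral[OF assms(7)] by blast
  have \<omega>0: "\<And>j. j < n \<Longrightarrow> \<omega> j \<ge> 0" using assms(5) by simp
  have "jensen_tsallis \<alpha> m n \<omega> \<rho>
      \<le> classical_tsallis \<alpha> ({..<n} \<times> {..<m}) (\<lambda>(j,k). \<omega> j * q j k)
        - (\<Sum>j<n. \<omega> j * classical_tsallis \<alpha> {..<m} (q j))"
    unfolding jensen_tsallis_def
    using tsallis_entropy_mixture_le[OF assms(1) \<omega>0 U \<rho> q0]
      tsallis_entropy_spectral[OF assms(1) U \<rho> q0] by simp
  also have "\<dots> \<le> classical_tsallis \<alpha> {..<n} \<omega>"
    using classical_tsallis_joint_le[where q = q, OF assms(1) \<omega>0 assms(6) q0 q1] by simp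
  also have "\<dots> = jensen_tsallis \<alpha> m n \<omega> (delta_mat m)"
    by (rule jensen_tsallis_delta_mat[OF assms(1,4) \<omega>0, symmetric])
  finally show "jensen_tsallis \<alpha> m n \<omega> \<rho> \<le> jensen_tsallis \<alpha> m n \<omega> (delta_mat m)" .
qed

end
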